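(* Let $S$ be a semigroup. If $\ell^{1}(S)^{**}$ is pseudo-contractible, then $S$ is amenable.
   Context: $\ell^1(S)$ is the semigroup algebra of $S$ and $\ell^1(S)^{**}$ carries the first Arens product. A Banach algebra $A$ is pseudo-contractible if there is a (not necessarily bounded) net $(m_\alpha)$ in $A\otimes_p A$ such that $a\cdot m_\alpha=m_\alpha\cdot a$ and $\pi_A(m_\alpha)a\to a$ for all $a\in A$, where $\pi_A(a\otimes b)=ab$ and the module actions are $a\cdot(b\otimes c)=ab\otimes c$, $(b\otimes c)\cdot a=b\otimes ca$. With $\phi$ the augmentation character on $\ell^1(S)$, $S$ is left (right) amenable if there is $m\in\ell^1(S)^{**}$ with $\delta_s\cdot m=m$ (resp. $m\cdot\delta_s=m$) for all $s\in S$ and $\|m\|=m(\phi)=1$; $S$ is amenable if it is both left and right amenable. *)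

theory Defs
  imports Complex_Main
begin

text \<open>Concrete model of l^1(S)** for a semigroup S (type 's), scalars complex.
  l^infinity(S) = l^1(S)* is the set of bounded functions S -> complex.
  An element of l^1(S)** is a bounded linear functional on l^infinity(S),
  represented extensionally (value 0 outside l^infinity(S)).\<close>

type_synonym 's linf = "'s \<Rightarrow> complex"
type_synonym 's bid = "'s linf \<Rightarrow> complex"

definition linf :: "'s linf set" where
  "linf = {f. \<exists>K. \<forall>s. cmod (f s) \<le> K}"

definition supnorm :: "'s linf \<Rightarrow> real" where
  "supnorm f = (SUP s. cmod (f s))"

definition bidual :: "'s bid set" where
  "bidual = {m.
     (\<forall>f\<in>linf. \<forall>g\<in>linf. m (\<lambda>s. f s + g s) = m f + m g) \<and>
     (\<forall>c. \<forall>f\<in>linf. m (\<lambda>s. c * f s) = c * m f) \<and>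
     (\<exists>K. \<forall>f\<in>linf. cmod (m f) \<le> K * supnorm f) \<and>
     (\<forall>f. f \<notin> linf \<longrightarrow> m f = 0)}"

definition bnorm :: "'s bid \<Rightarrow> real" where
  "bnorm m = (SUP f\<in>{f\<in>linf. supnorm f \<le> 1}. cmod (m f))"

definition badd :: "'s bid \<Rightarrow> 's bid \<Rightarrow> 's bid" where
  "badd x y = (\<lambda>f. x f + y f)"

definition bscale :: "complex \<Rightarrow> 's bid \<Rightarrow> 's bid" where
  "bscale c x = (\<lambda>f. c * x f)"

text \<open>First Arens product:  (f.a)(b) = f(ab), (n.f)(a) = n(f.a), (m n)(f) = m(n.f).
  For l^1(S): (f.delta_s)(t) = f(st), (n.f)(s) = n(t |-> f(st)).\<close>
definition arens :: "('s::semigroup_mult) bid \<Rightarrow> 's bid \<Rightarrow> 's bid" where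
  "arens m n = (\<lambda>f. if f \<in> linf then m (\<lambda>s. n (\<lambda>t. f (s * t))) else 0)"

text \<open>Canonical image of the point mass delta_s in l^1(S)**.\<close>
definition dhat :: "'s \<Rightarrow> 's bid" where
  "dhat s = (\<lambda>f. if f \<in> linf then f s else 0)"

text \<open>The augmentation character phi (phi(delta_s) = 1) as an element of l^infinity(S).\<close>
definition augm :: "'s linf" where
  "augm = (\<lambda>_. 1)"

text \<open>Bounded bilinear forms on l^1(S)** x l^1(S)** (the dual of the projective tensor product).\<close>
definition bbil :: "('s bid \<Rightarrow> 's bid \<Rightarrow> complex) set" where
  "bbil = {\<Phi>.
     (\<forall>x\<in>bidual. \<forall>y\<in>bidual. \<forall>z\<in>bidual.
        \<Phi> (badd x y) z = \<Phi> x z + \<Phi> y z \<and> \<Phi> z (badd x y) = \<Phi> z x + \<Phi> z y) \<and>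
     (\<forall>c. \<forall>x\<in>bidual. \<forall>y\<in>bidual.
        \<Phi> (bscale c x) y = c * \<Phi> x y \<and> \<Phi> x (bscale c y) = c * \<Phi> x y) \<and>
     (\<exists>K. \<forall>x\<in>bidual. \<forall>y\<in>bidual. cmod (\<Phi> x y) \<le> K * bnorm x * bnorm y)}"

text \<open>The projective tensor product A \<otimes>_p A for A = l^1(S)**: every element is
  a series sum_i x_i \<otimes> y_i with sum_i ||x_i|| ||y_i|| < infinity, and is identified
  (faithfully, by Hahn-Banach) with the functional Phi |-> sum_i Phi(x_i,y_i) on bounded
  bilinear forms.\<close>
definition ptensor :: "(('s bid \<Rightarrow> 's bid \<Rightarrow> complex) \<Rightarrow> complex) set" where
  "ptensor = {u. \<exists>x y. (\<forall>i::nat. x i \<in> bidual \<and> y i \<in> bidual) \<and>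
      summable (\<lambda>i. bnorm (x i) * bnorm (y i)) \<and>
      u = (\<lambda>\<Phi>. if \<Phi> \<in> bbil then (\<Sum>i. \<Phi> (x i) (y i)) else 0)}"

text \<open>Module actions a.(b \<otimes> c) = ab \<otimes> c and (b \<otimes> c).a = b \<otimes> ca.\<close>
definition tlmod :: "('s::semigroup_mult) bid \<Rightarrow> (('s bid \<Rightarrow> 's bid \<Rightarrow> complex) \<Rightarrow> complex)
    \<Rightarrow> (('s bid \<Rightarrow> 's bid \<Rightarrow> complex) \<Rightarrow> complex)" where
  "tlmod a u = (\<lambda>\<Phi>. if \<Phi> \<in> bbil then u (\<lambda>x y. \<Phi> (arens a x) y) else 0)"

definition trmod :: "(('s::semigroup_mult bid \<Rightarrow> 's bid \<Rightarrow> complex) \<Rightarrow> complex) \<Rightarrow> 's bid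
    \<Rightarrow> (('s bid \<Rightarrow> 's bid \<Rightarrow> complex) \<Rightarrow> complex)" where
  "trmod u a = (\<lambda>\<Phi>. if \<Phi> \<in> bbil then u (\<lambda>x y. \<Phi> x (arens y a)) else 0)"

text \<open>The multiplication map pi(b \<otimes> c) = bc (Arens product).\<close>
definition tpi :: "(('s::semigroup_mult bid \<Rightarrow> 's bid \<Rightarrow> complex) \<Rightarrow> complex) \<Rightarrow> 's bid" where
  "tpi u = (\<lambda>f. if f \<in> linf then u (\<lambda>x y. arens x y f) else 0)"

text \<open>Pseudo-contractibility of l^1(S)** with the first Arens product.  A net is
  rendered as a proper filter (the eventuality filter of the net).\<close>
definition bidual_pseudo_contractible :: "('s::semigroup_mult) itself \<Rightarrow> bool" where
  "bidual_pseudo_contractible _ \<longleftrightarrow>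
    (\<exists>F :: ((('s bid \<Rightarrow> 's bid \<Rightarrow> complex) \<Rightarrow> complex)) filter.
       F \<noteq> bot \<and>
       (\<forall>\<^sub>F m in F. m \<in> ptensor \<and> (\<forall>a\<in>bidual. tlmod a m = trmod m a)) \<and>
       (\<forall>a\<in>bidual. ((\<lambda>m. bnorm (\<lambda>f. arens (tpi m) a f - a f)) \<longlongrightarrow> 0) F))"

definition left_amenable :: "('s::semigroup_mult) itself \<Rightarrow> bool" where
  "left_amenable _ \<longleftrightarrow> (\<exists>m::'s bid. m \<in> bidual \<and> (\<forall>s. arens (dhat s) m = m) \<and>
      bnorm m = 1 \<and> m augm = 1)"

definition right_amenable :: "('s::semigroup_mult) itself \<Rightarrow> bool" where
  "right_amenable _ \<longleftrightarrow> (\<exists>m::'s bid. m \<in> bidual \<and> (\<forall>s. arens m (dhat s) = m) \<and>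
      bnorm m = 1 \<and> m augm = 1)"

definition amenable_sg :: "('s::semigroup_mult) itself \<Rightarrow> bool" where
  "amenable_sg T \<longleftrightarrow> left_amenable T \<and> right_amenable T"

end

theory Submission
  imports Defs
begin

text \<open>Take an element \<open>u\<close> of the diagonal net with \<open>\<pi>(u) \<delta>\<^sub>s\<close> close to \<open>\<delta>\<^sub>s\<close>. Since the
  augmentation character \<open>\<phi>\<close> is multiplicative on \<open>\<ell>\<^sup>1(S)\<^sup>*\<^sup>*\<close>, \<open>c = \<pi>(u)(\<phi>)\<close> is close
  to \<open>1\<close>, hence nonzero. Slicing \<open>u\<close> by \<open>\<phi>\<close> in one tensor factor gives functionals
  \<open>(id \<otimes> \<phi>)(u)\<close> and \<open>(\<phi> \<otimes> id)(u)\<close> on \<open>\<ell>\<^sup>\<infinity>(S)\<close> that take the value \<open>c\<close> at \<open>\<phi>\<close> and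
  are left resp. right invariant, because \<open>\<delta>\<^sub>s \<cdot> u = u \<cdot> \<delta>\<^sub>s\<close>. Finally, by Day's argument,
  a bounded invariant functional with value \<open>1\<close> at \<open>\<phi>\<close> yields an invariant mean: the positive
  part of its real part is again invariant, and its linear extension, normalised at \<open>1\<close>,
  has norm \<open>1\<close>.\<close>

section \<open>Bounded functions and the bidual\<close>

lemma linfI: "(\<And>s. cmod (f s) \<le> C) \<Longrightarrow> f \<in> linf"
  unfolding linf_def by blast

lemma norm_le_supnorm: "f \<in> linf \<Longrightarrow> cmod (f s) \<le> supnorm f"
  unfolding supnorm_def linf_def by (rule cSUP_upper) (auto simp: bdd_above_def)

lemma supnorm_nonneg: "f \<in> linf \<Longrightarrow> 0 \<le> supnorm f"
  using norm_le_supnorm[of f undefined] norm_ge_zero order_trans by blast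

lemma supnorm_least: "(\<And>s. cmod (f s) \<le> C) \<Longrightarrow> supnorm f \<le> C"
  unfolding supnorm_def by (rule cSUP_least) auto

lemma augm_in_linf: "augm \<in> linf"
  unfolding augm_def by (rule linfI[of _ 1]) simp

lemma supnorm_augm: "supnorm augm = 1"
  unfolding augm_def supnorm_def by simp

lemma linf_comp: "f \<in> linf \<Longrightarrow> (\<lambda>t. f (\<sigma> t)) \<in> linf"
  by (rule linfI[of _ "supnorm f"]) (rule norm_le_supnorm)

lemma supnorm_comp_le: "f \<in> linf \<Longrightarrow> supnorm (\<lambda>t. f (\<sigma> t)) \<le> supnorm f"
  by (rule supnorm_least) (rule norm_le_supnorm)

lemma linf_add: "f \<in> linf \<Longrightarrow> g \<in> linf \<Longrightarrow> (\<lambda>s. f s + g s) \<in> linf"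
  by (rule linfI[of _ "supnorm f + supnorm g"])
    (meson add_mono norm_le_supnorm norm_triangle_ineq order_trans)

lemma linf_scale: "f \<in> linf \<Longrightarrow> (\<lambda>s. c * f s) \<in> linf"
  by (rule linfI[of _ "cmod c * supnorm f"]) (simp add: norm_le_supnorm mult_left_mono norm_mult)

lemma linf_zero: "(\<lambda>s. 0) \<in> linf"
  by (rule linfI[of _ 0]) simp

lemma bidual_add: "m \<in> bidual \<Longrightarrow> f \<in> linf \<Longrightarrow> g \<in> linf \<Longrightarrow> m (\<lambda>s. f s + g s) = m f + m g"
  unfolding bidual_def by blast

lemma bidual_scale: "m \<in> bidual \<Longrightarrow> f \<in> linf \<Longrightarrow> m (\<lambda>s. c * f s) = c * m f"
  unfolding bidual_def by blast

lemma bidual_outside: "m \<in> bidual \<Longrightarrow> f \<notin> linf \<Longrightarrow> m f = 0"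
  unfolding bidual_def by blast

lemma bidual_zero: "m \<in> bidual \<Longrightarrow> m (\<lambda>s. 0) = 0"
  using bidual_scale[of m "\<lambda>s. 0" 0] linf_zero by simp

lemma bidual_bounded:
  assumes "m \<in> bidual"
  obtains K where "\<And>f. f \<in> linf \<Longrightarrow> cmod (m f) \<le> K * supnorm f"
  using assms unfolding bidual_def by blast

lemma norm_le_bnorm:
  assumes m: "m \<in> bidual" and f: "f \<in> linf" "supnorm f \<le> 1"
  shows "cmod (m f) \<le> bnorm m"
proof -
  obtain K where K: "\<And>f. f \<in> linf \<Longrightarrow> cmod (m f) \<le> K * supnorm f"
    using bidual_bounded[OF m] by blast
  have "cmod (m g) \<le> max K 0" if "g \<in> linf" "supnorm g \<le> 1" for g
  proof -
    have "K * supnorm g \<le> max K 0"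
      using that supnorm_nonneg[of g]
      by (cases "K \<ge> 0") (auto intro: mult_left_le order_trans mult_nonpos_nonneg)
    then show ?thesis using K[OF \<open>g \<in> linf\<close>] by linarith
  qed
  then show ?thesis
    unfolding bnorm_def using f by (intro cSUP_upper bdd_aboveI2) auto
qed

lemma bnorm_least:
  "(\<And>f. f \<in> linf \<Longrightarrow> supnorm f \<le> 1 \<Longrightarrow> cmod (m f) \<le> C) \<Longrightarrow> bnorm m \<le> C"
  unfolding bnorm_def
proof (rule cSUP_least)
  have "augm \<in> {f \<in> linf. supnorm f \<le> 1}" by (simp add: augm_in_linf supnorm_augm)
  then show "{f \<in> linf. supnorm f \<le> 1} \<noteq> {}" by blast
qed auto

lemma bnorm_nonneg: "m \<in> bidual \<Longrightarrow> 0 \<le> bnorm m"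
  using norm_le_bnorm[OF _ linf_zero] bidual_zero supnorm_least[of "\<lambda>s. 0" 1] by fastforce

lemma norm_le_bnorm_supnorm:
  assumes m: "m \<in> bidual" and f: "f \<in> linf"
  shows "cmod (m f) \<le> bnorm m * supnorm f"
proof (cases "supnorm f = 0")
  case True
  then have "f = (\<lambda>s. 0)" using norm_le_supnorm[OF f] by (metis norm_le_zero_iff ext)
  then show ?thesis using bidual_zero[OF m] True by simp
next
  case False
  define N where "N = supnorm f"
  have N: "N > 0" using False supnorm_nonneg[OF f] N_def by simp
  define g where "g = (\<lambda>s. complex_of_real (1/N) * f s)"
  have "supnorm g \<le> 1"
    unfolding g_def using norm_le_supnorm[OF f] N N_def
    by (intro supnorm_least) (simp add: norm_mult norm_divide divide_le_eq_1)
  moreover have "g \<in> linf" unfolding g_def by (rule linf_scale[OF f])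
  ultimately have "cmod (m g) \<le> bnorm m" using norm_le_bnorm[OF m] by blast
  moreover have "m g = complex_of_real (1/N) * m f" unfolding g_def using bidual_scale[OF m f] .
  ultimately have "cmod (m f) / N \<le> bnorm m" using N by (simp add: norm_divide)
  then show ?thesis using N N_def by (simp add: field_simps mult.commute)
qed

lemma badd_in_bidual: "x \<in> bidual \<Longrightarrow> y \<in> bidual \<Longrightarrow> badd x y \<in> bidual"
proof -
  assume x: "x \<in> bidual" and y: "y \<in> bidual"
  have "cmod (x f + y f) \<le> (bnorm x + bnorm y) * supnorm f" if "f \<in> linf" for f
    using norm_le_bnorm_supnorm[OF x that] norm_le_bnorm_supnorm[OF y that]
    by (metis add_mono distrib_right norm_triangle_le)
  then show ?thesis using x y unfolding badd_def bidual_def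
    by (auto simp: algebra_simps intro!: exI[of _ "bnorm x + bnorm y"])
qed

lemma bscale_in_bidual: "x \<in> bidual \<Longrightarrow> bscale c x \<in> bidual"
proof -
  assume x: "x \<in> bidual"
  have "cmod (c * x f) \<le> (cmod c * bnorm x) * supnorm f" if "f \<in> linf" for f
    using norm_le_bnorm_supnorm[OF x that] by (simp add: norm_mult mult.assoc mult_left_mono)
  then show ?thesis using x unfolding bscale_def bidual_def
    by (auto simp: algebra_simps intro!: exI[of _ "cmod c * bnorm x"])
qed

lemma bidual_diff: "x \<in> bidual \<Longrightarrow> y \<in> bidual \<Longrightarrow> (\<lambda>f. x f - y f) \<in> bidual"
proof -
  assume "x \<in> bidual" "y \<in> bidual"
  moreover have "(\<lambda>f. x f - y f) = badd x (bscale (-1) y)"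
    by (simp add: badd_def bscale_def fun_eq_iff)
  ultimately show ?thesis by (simp add: badd_in_bidual bscale_in_bidual)
qed

lemma dhat_in_bidual: "dhat s \<in> bidual"
  unfolding bidual_def dhat_def by (auto intro!: exI[of _ 1] simp: linf_add linf_scale norm_le_supnorm)


section \<open>The first Arens product\<close>

lemma linf_bidual_translates:
  fixes g :: "('s::semigroup_mult) linf"
  assumes y: "y \<in> bidual" and g: "g \<in> linf"
  shows "(\<lambda>s. y (\<lambda>t. g (s * t))) \<in> linf"
    and "supnorm (\<lambda>s. y (\<lambda>t. g (s * t))) \<le> bnorm y * supnorm g"
proof -
  have "cmod (y (\<lambda>t. g (s * t))) \<le> bnorm y * supnorm g" for s
    using norm_le_bnorm_supnorm[OF y linf_comp[OF g]]
      mult_left_mono[OF supnorm_comp_le[OF g] bnorm_nonneg[OF y]] by (rule order_trans)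
  then show "(\<lambda>s. y (\<lambda>t. g (s * t))) \<in> linf" "supnorm (\<lambda>s. y (\<lambda>t. g (s * t))) \<le> bnorm y * supnorm g"
    by (auto intro: linfI supnorm_least)
qed

lemma arens_bound:
  fixes g :: "('s::semigroup_mult) linf"
  assumes x: "x \<in> bidual" and y: "y \<in> bidual" and g: "g \<in> linf"
  shows "cmod (arens x y g) \<le> supnorm g * bnorm x * bnorm y"
proof -
  have "cmod (arens x y g) \<le> bnorm x * supnorm (\<lambda>s. y (\<lambda>t. g (s * t)))"
    unfolding arens_def using g by (simp add: norm_le_bnorm_supnorm x linf_bidual_translates y)
  also have "\<dots> \<le> bnorm x * (bnorm y * supnorm g)"
    by (rule mult_left_mono[OF linf_bidual_translates(2)[OF y g] bnorm_nonneg[OF x]])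
  finally show ?thesis by (simp add: algebra_simps)
qed

lemma arens_add:
  fixes f g :: "('s::semigroup_mult) linf"
  assumes x: "x \<in> bidual" and y: "y \<in> bidual" and f: "f \<in> linf" and g: "g \<in> linf"
  shows "arens x y (\<lambda>s. f s + g s) = arens x y f + arens x y g"
proof -
  have "y (\<lambda>t. f (s * t) + g (s * t)) = y (\<lambda>t. f (s * t)) + y (\<lambda>t. g (s * t))" for s
    by (rule bidual_add[OF y linf_comp[OF f] linf_comp[OF g]])
  then show ?thesis
    unfolding arens_def
    using f g linf_add[OF f g]
      bidual_add[OF x linf_bidual_translates(1)[OF y f] linf_bidual_translates(1)[OF y g]]
    by simp
qed

lemma arens_scale:
  fixes f :: "('s::semigroup_mult) linf"
  assumes x: "x \<in> bidual" and y: "y \<in> bidual" and f: "f \<in> linf"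
  shows "arens x y (\<lambda>s. c * f s) = c * arens x y f"
proof -
  have "y (\<lambda>t. c * f (s * t)) = c * y (\<lambda>t. f (s * t))" for s
    by (rule bidual_scale[OF y linf_comp[OF f]])
  then show ?thesis
    unfolding arens_def
    using f linf_scale[OF f] bidual_scale[OF x linf_bidual_translates(1)[OF y f]]
    by simp
qed

lemma arens_in_bidual:
  fixes x y :: "('s::semigroup_mult) bid"
  assumes x: "x \<in> bidual" and y: "y \<in> bidual"
  shows "arens x y \<in> bidual"
  unfolding bidual_def
  using arens_add[OF x y] arens_scale[OF x y] arens_bound[OF x y]
  by (auto intro!: exI[of _ "bnorm x * bnorm y"] simp: arens_def mult.commute mult.left_commute)

lemma arens_outside: "f \<notin> linf \<Longrightarrow> arens x y f = 0"
  unfolding arens_def by simp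

lemma arens_dhat_left:
  fixes f :: "('s::semigroup_mult) linf"
  assumes y: "y \<in> bidual" and f: "f \<in> linf"
  shows "arens (dhat s) y f = y (\<lambda>t. f (s * t))"
  unfolding arens_def dhat_def using f linf_bidual_translates(1)[OF y f] by simp

lemma arens_dhat_right:
  fixes f :: "('s::semigroup_mult) linf"
  assumes f: "f \<in> linf"
  shows "arens x (dhat s) f = x (\<lambda>t. f (t * s))"
proof -
  have "(\<lambda>t. f (s' * t)) \<in> linf" for s' by (rule linf_comp[OF f])
  then show ?thesis unfolding arens_def dhat_def using f by simp
qed

lemma arens_augm:
  fixes x y :: "('s::semigroup_mult) bid"
  assumes x: "x \<in> bidual"
  shows "arens x y augm = x augm * y augm"
proof -
  have "arens x y augm = x (\<lambda>s. y augm * augm s)"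
    unfolding arens_def if_P[OF augm_in_linf] by (simp add: augm_def)
  also have "\<dots> = x augm * y augm" by (simp add: bidual_scale[OF x augm_in_linf])
  finally show ?thesis .
qed

lemma dhat_augm: "dhat s augm = 1"
  unfolding dhat_def if_P[OF augm_in_linf] by (simp add: augm_def)

section \<open>The projective tensor product\<close>

type_synonym 's tens = "('s bid \<Rightarrow> 's bid \<Rightarrow> complex) \<Rightarrow> complex"

lemma bbil_cong:
  assumes "\<Phi> \<in> bbil" and "\<forall>x\<in>bidual. \<forall>y\<in>bidual. \<Psi> x y = \<Phi> x y"
  shows "\<Psi> \<in> bbil"
  using assms unfolding bbil_def by (simp add: badd_in_bidual bscale_in_bidual)

lemma bbil_bounded:
  assumes "\<Phi> \<in> bbil"
  obtains K where "K \<ge> 0" "\<And>x y. x \<in> bidual \<Longrightarrow> y \<in> bidual \<Longrightarrow> cmod (\<Phi> x y) \<le> K * bnorm x * bnorm y"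
proof -
  obtain K where K: "\<forall>x\<in>bidual. \<forall>y\<in>bidual. cmod (\<Phi> x y) \<le> K * bnorm x * bnorm y"
    using assms unfolding bbil_def by blast
  have "K * bnorm x * bnorm y \<le> max K 0 * bnorm x * bnorm y" if "x \<in> bidual" "y \<in> bidual" for x y
    using bnorm_nonneg[OF that(1)] bnorm_nonneg[OF that(2)] by (intro mult_right_mono) auto
  with K show ?thesis by (intro that[of "max K 0"]) force+
qed

lemma norm_product_le:
  fixes f g :: "'s linf"
  assumes x: "x \<in> bidual" and y: "y \<in> bidual" and f: "f \<in> linf" and g: "g \<in> linf"
  shows "cmod (x f * y g) \<le> supnorm f * supnorm g * bnorm x * bnorm y"
proof -
  have "cmod (x f * y g) \<le> (bnorm x * supnorm f) * (bnorm y * supnorm g)"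
    unfolding norm_mult
    by (rule mult_mono)
      (auto intro: norm_le_bnorm_supnorm x y f g mult_nonneg_nonneg bnorm_nonneg supnorm_nonneg)
  then show ?thesis by (simp add: algebra_simps)
qed

lemma product_in_bbil:
  fixes f g :: "'s linf"
  assumes f: "f \<in> linf" and g: "g \<in> linf"
  shows "(\<lambda>x y. x f * y g) \<in> bbil"
  unfolding bbil_def using norm_product_le f g
  by (auto simp: badd_def bscale_def algebra_simps intro!: exI[of _ "supnorm f * supnorm g"])

lemma arens_in_bbil:
  assumes g: "(g::('s::semigroup_mult) linf) \<in> linf"
  shows "(\<lambda>x y. arens x y g) \<in> bbil"
  unfolding bbil_def
proof (intro CollectI conjI ballI allI exI[of _ "supnorm g"])
  fix x y z :: "'s bid" assume x: "x \<in> bidual" and y: "y \<in> bidual" and z: "z \<in> bidual"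
  show "cmod (arens x y g) \<le> supnorm g * bnorm x * bnorm y" by (rule arens_bound[OF x y g])
  show "arens (badd x y) z g = arens x z g + arens y z g"
    unfolding arens_def badd_def by simp
  show "arens z (badd x y) g = arens z x g + arens z y g"
    unfolding arens_def badd_def using g
    by (simp add: bidual_add[OF z linf_bidual_translates(1)[OF x g] linf_bidual_translates(1)[OF y g]])
  show "arens (bscale c x) y g = c * arens x y g" for c
    unfolding arens_def bscale_def by simp
  show "arens x (bscale c y) g = c * arens x y g" for c
    unfolding arens_def bscale_def using g
    by (simp add: bidual_scale[OF x linf_bidual_translates(1)[OF y g]])
qed

lemma ptensor_repr:
  fixes u :: "'s tens"
  assumes "u \<in> ptensor"
  obtains x y where "\<And>i. x i \<in> bidual" "\<And>i. y i \<in> bidual"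
    "summable (\<lambda>i. bnorm (x i) * bnorm (y i))"
    "\<And>\<Phi>. \<Phi> \<in> bbil \<Longrightarrow> u \<Phi> = (\<Sum>i. \<Phi> (x i) (y i))"
    "\<And>\<Phi>. \<Phi> \<in> bbil \<Longrightarrow> summable (\<lambda>i. norm (\<Phi> (x i) (y i)))"
proof -
  obtain x y where x: "\<And>i. x i \<in> bidual" and y: "\<And>i. y i \<in> bidual"
    and s: "summable (\<lambda>i. bnorm (x i) * bnorm (y i))"
    and u: "u = (\<lambda>\<Phi>. if \<Phi> \<in> bbil then (\<Sum>i. \<Phi> (x i) (y i)) else 0)"
    using assms unfolding ptensor_def by blast
  have summable: "summable (\<lambda>i. norm (\<Phi> (x i) (y i)))" if \<Phi>: "\<Phi> \<in> bbil" for \<Phi>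
  proof -
    obtain K where "K \<ge> 0" "\<And>x y. x \<in> bidual \<Longrightarrow> y \<in> bidual \<Longrightarrow> cmod (\<Phi> x y) \<le> K * bnorm x * bnorm y"
      using bbil_bounded[OF \<Phi>] by blast
    then show ?thesis
      using x y s
      by (auto intro!: summable_comparison_test[where g="\<lambda>i. K * (bnorm (x i) * bnorm (y i))"]
          summable_mult simp: mult.assoc)
  qed
  show ?thesis by (rule that[OF x y s]) (simp_all add: u summable)
qed

lemma ptensor_lincomb:
  fixes u :: "'s tens"
  assumes u: "u \<in> ptensor" and \<Phi>: "\<Phi> \<in> bbil" and \<Psi>: "\<Psi> \<in> bbil" and \<Theta>: "\<Theta> \<in> bbil"
    and e: "\<forall>x\<in>bidual. \<forall>y\<in>bidual. \<Theta> x y = a * \<Phi> x y + b * \<Psi> x y"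
  shows "u \<Theta> = a * u \<Phi> + b * u \<Psi>"
proof -
  obtain x y where xy: "\<And>i. x i \<in> bidual" "\<And>i. y i \<in> bidual"
    and "summable (\<lambda>i. bnorm (x i) * bnorm (y i))"
    and val: "\<And>\<Phi>. \<Phi> \<in> bbil \<Longrightarrow> u \<Phi> = (\<Sum>i. \<Phi> (x i) (y i))"
    and sum: "\<And>\<Phi>. \<Phi> \<in> bbil \<Longrightarrow> summable (\<lambda>i. norm (\<Phi> (x i) (y i)))"
    using ptensor_repr[OF u] by blast
  have "u \<Theta> = (\<Sum>i. a * \<Phi> (x i) (y i) + b * \<Psi> (x i) (y i))"
    using val[OF \<Theta>] e xy by simp
  also have "\<dots> = a * (\<Sum>i. \<Phi> (x i) (y i)) + b * (\<Sum>i. \<Psi> (x i) (y i))"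
    using summable_norm_cancel[OF sum[OF \<Phi>]] summable_norm_cancel[OF sum[OF \<Psi>]]
    by (simp add: suminf_add[symmetric] suminf_mult summable_mult)
  finally show ?thesis using val[OF \<Phi>] val[OF \<Psi>] by simp
qed

lemma ptensor_cong:
  assumes u: "u \<in> ptensor" and \<Phi>: "\<Phi> \<in> bbil" and e: "\<forall>x\<in>bidual. \<forall>y\<in>bidual. \<Psi> x y = \<Phi> x y"
  shows "u \<Psi> = u \<Phi>"
  using ptensor_lincomb[OF u \<Phi> \<Phi> bbil_cong[OF \<Phi> e], of 1 0] e by simp

lemma ptensor_bounded:
  fixes u :: "'s tens"
  assumes u: "u \<in> ptensor"
  obtains B where "\<And>\<Phi> C. \<Phi> \<in> bbil \<Longrightarrow> \<forall>x\<in>bidual. \<forall>y\<in>bidual. cmod (\<Phi> x y) \<le> C * bnorm x * bnorm y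
    \<Longrightarrow> cmod (u \<Phi>) \<le> C * B"
proof -
  obtain x y where xy: "\<And>i. x i \<in> bidual" "\<And>i. y i \<in> bidual"
    and s: "summable (\<lambda>i. bnorm (x i) * bnorm (y i))"
    and val: "\<And>\<Phi>. \<Phi> \<in> bbil \<Longrightarrow> u \<Phi> = (\<Sum>i. \<Phi> (x i) (y i))"
    and sum: "\<And>\<Phi>. \<Phi> \<in> bbil \<Longrightarrow> summable (\<lambda>i. norm (\<Phi> (x i) (y i)))"
    using ptensor_repr[OF u] by blast
  have "cmod (u \<Phi>) \<le> C * (\<Sum>i. bnorm (x i) * bnorm (y i))"
    if \<Phi>: "\<Phi> \<in> bbil" and C: "\<forall>x\<in>bidual. \<forall>y\<in>bidual. cmod (\<Phi> x y) \<le> C * bnorm x * bnorm y" for \<Phi> C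
  proof -
    have "cmod (u \<Phi>) \<le> (\<Sum>i. norm (\<Phi> (x i) (y i)))"
      unfolding val[OF \<Phi>] by (rule summable_norm[OF sum[OF \<Phi>]])
    also have "\<dots> \<le> (\<Sum>i. C * (bnorm (x i) * bnorm (y i)))"
      using C xy by (intro suminf_le sum[OF \<Phi>] summable_mult[OF s]) (simp add: mult.assoc)
    also have "\<dots> = C * (\<Sum>i. bnorm (x i) * bnorm (y i))" using s by (simp add: suminf_mult)
    finally show ?thesis .
  qed
  then show ?thesis by (rule that)
qed

lemma ptensor_pairing_in_bidual:
  fixes u :: "'s tens" and P :: "'s linf \<Rightarrow> 's bid \<Rightarrow> 's bid \<Rightarrow> complex"
  assumes u: "u \<in> ptensor"
    and P_bbil: "\<And>f. f \<in> linf \<Longrightarrow> P f \<in> bbil"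
    and P_add: "\<And>f g x y. f \<in> linf \<Longrightarrow> g \<in> linf \<Longrightarrow> x \<in> bidual \<Longrightarrow> y \<in> bidual \<Longrightarrow>
      P (\<lambda>s. f s + g s) x y = P f x y + P g x y"
    and P_scale: "\<And>f c x y. f \<in> linf \<Longrightarrow> x \<in> bidual \<Longrightarrow> y \<in> bidual \<Longrightarrow>
      P (\<lambda>s. c * f s) x y = c * P f x y"
    and P_bound: "\<And>f x y. f \<in> linf \<Longrightarrow> x \<in> bidual \<Longrightarrow> y \<in> bidual \<Longrightarrow>
      cmod (P f x y) \<le> supnorm f * bnorm x * bnorm y"
  shows "(\<lambda>f. if f \<in> linf then u (P f) else 0) \<in> bidual"
proof -
  obtain B where B: "\<And>\<Phi> C. \<Phi> \<in> bbil \<Longrightarrow> \<forall>x\<in>bidual. \<forall>y\<in>bidual. cmod (\<Phi> x y) \<le> C * bnorm x * bnorm y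
    \<Longrightarrow> cmod (u \<Phi>) \<le> C * B"
    using ptensor_bounded[OF u] by blast
  have add: "u (P (\<lambda>s. f s + g s)) = u (P f) + u (P g)" if "f \<in> linf" "g \<in> linf" for f g
    using ptensor_lincomb[OF u P_bbil P_bbil P_bbil[OF linf_add], of f g f g 1 1] that P_add by simp
  have scale: "u (P (\<lambda>s. c * f s)) = c * u (P f)" if "f \<in> linf" for c f
    using ptensor_lincomb[OF u P_bbil P_bbil P_bbil[OF linf_scale], of f f f c c 0] that P_scale by simp
  have bound: "cmod (u (P f)) \<le> B * supnorm f" if "f \<in> linf" for f
    using B[OF P_bbil[OF that], of "supnorm f"] P_bound[OF that] by (simp add: mult.commute)
  show ?thesis
    unfolding bidual_def using add scale bound by (auto intro!: exI[of _ B] simp: linf_add linf_scale)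
qed

lemma tpi_in_bidual:
  fixes u :: "('s::semigroup_mult) tens"
  assumes u: "u \<in> ptensor"
  shows "tpi u \<in> bidual"
  unfolding tpi_def
  by (rule ptensor_pairing_in_bidual[OF u arens_in_bbil])
    (auto simp: arens_add arens_scale arens_bound)

section \<open>Invariant functionals from a diagonal\<close>

text \<open>\<open>slice_left u\<close> and \<open>slice_right u\<close> are \<open>(id \<otimes> \<phi>)(u)\<close> and \<open>(\<phi> \<otimes> id)(u)\<close>, where \<open>\<phi>\<close>
  acts on \<open>\<ell>\<^sup>1(S)\<^sup>*\<^sup>*\<close> as \<open>x \<mapsto> x augm\<close>.\<close>
definition slice_left :: "'s tens \<Rightarrow> 's bid" where
  "slice_left u f = (if f \<in> linf then u (\<lambda>x y. x f * y augm) else 0)"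

definition slice_right :: "'s tens \<Rightarrow> 's bid" where
  "slice_right u f = (if f \<in> linf then u (\<lambda>x y. x augm * y f) else 0)"

lemma slice_left_in_bidual:
  fixes u :: "'s tens"
  assumes u: "u \<in> ptensor"
  shows "slice_left u \<in> bidual"
  unfolding slice_left_def[abs_def]
proof (rule ptensor_pairing_in_bidual[OF u product_in_bbil[OF _ augm_in_linf]])
  show "cmod (x f * y augm) \<le> supnorm f * bnorm x * bnorm y"
    if "f \<in> linf" "x \<in> bidual" "y \<in> bidual" for f :: "'s linf" and x y :: "'s bid"
    using norm_product_le[OF that(2,3,1) augm_in_linf] by (simp add: supnorm_augm)
qed (simp_all add: bidual_add bidual_scale algebra_simps)

lemma slice_right_in_bidual:
  fixes u :: "'s tens"
  assumes u: "u \<in> ptensor"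
  shows "slice_right u \<in> bidual"
  unfolding slice_right_def[abs_def]
proof (rule ptensor_pairing_in_bidual[OF u product_in_bbil[OF augm_in_linf]])
  show "cmod (x augm * y f) \<le> supnorm f * bnorm x * bnorm y"
    if "f \<in> linf" "x \<in> bidual" "y \<in> bidual" for f :: "'s linf" and x y :: "'s bid"
    using norm_product_le[OF that(2,3) augm_in_linf that(1)] by (simp add: supnorm_augm)
qed (simp_all add: bidual_add bidual_scale algebra_simps)

lemma slice_left_comp_mult:
  fixes u :: "('s::semigroup_mult) tens"
  assumes u: "u \<in> ptensor" and comm: "tlmod (dhat s) u = trmod u (dhat s)" and f: "f \<in> linf"
  shows "slice_left u (\<lambda>t. f (s * t)) = slice_left u f"
proof -
  have fs: "(\<lambda>t. f (s * t)) \<in> linf" by (rule linf_comp[OF f])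
  have "slice_left u (\<lambda>t. f (s * t)) = u (\<lambda>x y. arens (dhat s) x f * y augm)"
    unfolding slice_left_def if_P[OF fs]
    by (rule ptensor_cong[OF u product_in_bbil[OF fs augm_in_linf], symmetric])
      (simp add: arens_dhat_left f)
  also have "\<dots> = tlmod (dhat s) u (\<lambda>x y. x f * y augm)"
    unfolding tlmod_def using product_in_bbil[OF f augm_in_linf] by simp
  also have "\<dots> = u (\<lambda>x y. x f * arens y (dhat s) augm)"
    unfolding comm trmod_def using product_in_bbil[OF f augm_in_linf] by simp
  also have "\<dots> = slice_left u f"
    unfolding slice_left_def if_P[OF f]
    by (rule ptensor_cong[OF u product_in_bbil[OF f augm_in_linf]])
      (simp add: arens_augm dhat_augm)
  finally show ?thesis .
qed

lemma slice_right_comp_mult: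
  fixes u :: "('s::semigroup_mult) tens"
  assumes u: "u \<in> ptensor" and comm: "tlmod (dhat s) u = trmod u (dhat s)" and f: "f \<in> linf"
  shows "slice_right u (\<lambda>t. f (t * s)) = slice_right u f"
proof -
  have fs: "(\<lambda>t. f (t * s)) \<in> linf" by (rule linf_comp[OF f])
  have "slice_right u (\<lambda>t. f (t * s)) = u (\<lambda>x y. x augm * arens y (dhat s) f)"
    unfolding slice_right_def if_P[OF fs]
    by (rule ptensor_cong[OF u product_in_bbil[OF augm_in_linf fs], symmetric])
      (simp add: arens_dhat_right f)
  also have "\<dots> = tlmod (dhat s) u (\<lambda>x y. x augm * y f)"
    unfolding comm trmod_def using product_in_bbil[OF augm_in_linf f] by simp
  also have "\<dots> = u (\<lambda>x y. arens (dhat s) x augm * y f)"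
    unfolding tlmod_def using product_in_bbil[OF augm_in_linf f] by simp
  also have "\<dots> = slice_right u f"
    unfolding slice_right_def if_P[OF f]
    by (rule ptensor_cong[OF u product_in_bbil[OF augm_in_linf f]])
      (simp add: arens_augm dhat_in_bidual dhat_augm)
  finally show ?thesis .
qed

lemma slice_left_augm:
  assumes u: "u \<in> ptensor"
  shows "slice_left u augm = tpi u augm"
  unfolding slice_left_def tpi_def if_P[OF augm_in_linf]
  by (rule ptensor_cong[OF u arens_in_bbil[OF augm_in_linf]]) (simp add: arens_augm)

lemma slice_right_augm:
  assumes u: "u \<in> ptensor"
  shows "slice_right u augm = tpi u augm"
  unfolding slice_right_def tpi_def if_P[OF augm_in_linf]
  by (rule ptensor_cong[OF u arens_in_bbil[OF augm_in_linf]]) (simp add: arens_augm)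

lemma tpi_augm_neq_0:
  fixes u :: "('s::semigroup_mult) tens"
  assumes u: "u \<in> ptensor" and near: "bnorm (\<lambda>f. arens (tpi u) (dhat s) f - dhat s f) < 1"
  shows "tpi u augm \<noteq> 0"
proof -
  have "(\<lambda>f. arens (tpi u) (dhat s) f - dhat s f) \<in> bidual"
    by (intro bidual_diff arens_in_bidual tpi_in_bidual u dhat_in_bidual)
  then have "cmod (arens (tpi u) (dhat s) augm - dhat s augm) < 1"
    using norm_le_bnorm[OF _ augm_in_linf] near by (fastforce simp: supnorm_augm)
  moreover have "arens (tpi u) (dhat s) augm - dhat s augm = tpi u augm - 1"
    by (simp add: arens_augm tpi_in_bidual u dhat_augm)
  ultimately show ?thesis by auto
qed

section \<open>Invariant means from invariant functionals\<close>

definition real_bfun :: "('s \<Rightarrow> real) set" where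
  "real_bfun = {g. \<exists>K. \<forall>s. \<bar>g s\<bar> \<le> K}"

lemma real_bfunI: "(\<And>s. \<bar>g s\<bar> \<le> K) \<Longrightarrow> g \<in> real_bfun"
  unfolding real_bfun_def by blast

lemma real_bfun_dominated:
  assumes "g \<in> real_bfun" "k \<in> real_bfun" and "\<And>s. \<bar>h s\<bar> \<le> \<bar>g s\<bar> + \<bar>k s\<bar>"
  shows "h \<in> real_bfun"
proof -
  obtain K L where "\<And>s. \<bar>g s\<bar> \<le> K" "\<And>s. \<bar>k s\<bar> \<le> L"
    using assms(1,2) unfolding real_bfun_def by blast
  with assms(3) show ?thesis by (intro real_bfunI[of _ "K + L"]) (meson add_mono order_trans)
qed

lemma real_bfun_const: "(\<lambda>s. c) \<in> real_bfun"
  by (rule real_bfunI[of _ "\<bar>c\<bar>"]) simp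

lemma real_bfun_add: "g \<in> real_bfun \<Longrightarrow> k \<in> real_bfun \<Longrightarrow> (\<lambda>s. g s + k s) \<in> real_bfun"
  by (erule real_bfun_dominated) auto

lemma real_bfun_diff: "g \<in> real_bfun \<Longrightarrow> k \<in> real_bfun \<Longrightarrow> (\<lambda>s. g s - k s) \<in> real_bfun"
  by (erule real_bfun_dominated) auto

lemma real_bfun_min: "g \<in> real_bfun \<Longrightarrow> k \<in> real_bfun \<Longrightarrow> (\<lambda>s. min (g s) (k s)) \<in> real_bfun"
  by (erule real_bfun_dominated) auto

lemma real_bfun_pos_part: "g \<in> real_bfun \<Longrightarrow> (\<lambda>s. max (g s) 0) \<in> real_bfun"
  by (erule real_bfun_dominated[OF _ real_bfun_const]) auto

lemma real_bfun_neg_part: "g \<in> real_bfun \<Longrightarrow> (\<lambda>s. max (- g s) 0) \<in> real_bfun"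
  by (erule real_bfun_dominated[OF _ real_bfun_const]) auto

lemma real_bfun_scale:
  assumes "g \<in> real_bfun"
  shows "(\<lambda>s. c * g s) \<in> real_bfun"
proof -
  obtain K where "\<And>s. \<bar>g s\<bar> \<le> K" using assms unfolding real_bfun_def by blast
  then show ?thesis by (intro real_bfunI[of _ "\<bar>c\<bar> * K"]) (simp add: abs_mult mult_left_mono)
qed

lemma real_bfun_comp: "g \<in> real_bfun \<Longrightarrow> (\<lambda>t. g (\<sigma> t)) \<in> real_bfun"
  unfolding real_bfun_def by blast

lemma real_bfun_Re: "f \<in> linf \<Longrightarrow> (\<lambda>s. Re (f s)) \<in> real_bfun"
  by (rule real_bfunI[of _ "supnorm f"]) (meson abs_Re_le_cmod norm_le_supnorm order_trans)

lemma real_bfun_Im: "f \<in> linf \<Longrightarrow> (\<lambda>s. Im (f s)) \<in> real_bfun"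
  by (rule real_bfunI[of _ "supnorm f"]) (meson abs_Im_le_cmod norm_le_supnorm order_trans)

lemma linf_of_real: "g \<in> real_bfun \<Longrightarrow> (\<lambda>s. complex_of_real (g s)) \<in> linf"
  unfolding real_bfun_def linf_def by auto

text \<open>Day's construction: \<open>pos_part\<close> is the Riesz positive part of \<open>Re n\<close> on nonnegative
  bounded functions, and \<open>pos_part_real\<close>, \<open>pos_part_cplx\<close> are its linear extensions to real and
  complex bounded functions. Normalising at \<open>1\<close> gives a mean invariant under the same maps as \<open>n\<close>.\<close>
locale invariant_functional =
  fixes n :: "'s bid" and maps :: "('s \<Rightarrow> 's) set"
  assumes n_in_bidual: "n \<in> bidual" and n_augm: "n augm = 1"
    and n_comp: "\<And>\<sigma> f. \<sigma> \<in> maps \<Longrightarrow> f \<in> linf \<Longrightarrow> n (\<lambda>t. f (\<sigma> t)) = n f"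
begin

definition re_n :: "('s \<Rightarrow> real) \<Rightarrow> real" where
  "re_n g = Re (n (\<lambda>s. complex_of_real (g s)))"

lemma re_n_add: "g \<in> real_bfun \<Longrightarrow> h \<in> real_bfun \<Longrightarrow> re_n (\<lambda>s. g s + h s) = re_n g + re_n h"
  unfolding re_n_def using bidual_add[OF n_in_bidual linf_of_real linf_of_real, of g h] by simp

lemma re_n_scale: "g \<in> real_bfun \<Longrightarrow> re_n (\<lambda>s. c * g s) = c * re_n g"
  unfolding re_n_def using bidual_scale[OF n_in_bidual linf_of_real, of g "complex_of_real c"] by simp

lemma re_n_zero: "re_n (\<lambda>s. 0) = 0"
  unfolding re_n_def using bidual_zero[OF n_in_bidual] by simp

lemma re_n_comp: "\<sigma> \<in> maps \<Longrightarrow> g \<in> real_bfun \<Longrightarrow> re_n (\<lambda>t. g (\<sigma> t)) = re_n g"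
  unfolding re_n_def using n_comp[OF _ linf_of_real, of \<sigma> g] by simp

lemma re_n_le: "(\<And>s. \<bar>g s\<bar> \<le> C) \<Longrightarrow> re_n g \<le> bnorm n * C"
proof -
  assume g: "\<And>s. \<bar>g s\<bar> \<le> C"
  have l: "(\<lambda>s. complex_of_real (g s)) \<in> linf" using g by (intro linf_of_real real_bfunI)
  have "re_n g \<le> cmod (n (\<lambda>s. complex_of_real (g s)))" unfolding re_n_def by (rule complex_Re_le_cmod)
  also have "\<dots> \<le> bnorm n * supnorm (\<lambda>s. complex_of_real (g s))"
    by (rule norm_le_bnorm_supnorm[OF n_in_bidual l])
  also have "\<dots> \<le> bnorm n * C"
    using g by (intro mult_left_mono supnorm_least bnorm_nonneg n_in_bidual) auto
  finally show ?thesis .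
qed

definition minorants :: "('s \<Rightarrow> real) \<Rightarrow> ('s \<Rightarrow> real) set" where
  "minorants f = {g \<in> real_bfun. \<forall>s. 0 \<le> g s \<and> g s \<le> f s}"

definition pos_part :: "('s \<Rightarrow> real) \<Rightarrow> real" where
  "pos_part f = Sup (re_n ` minorants f)"

definition nonneg_bfun :: "('s \<Rightarrow> real) \<Rightarrow> bool" where
  "nonneg_bfun f \<longleftrightarrow> f \<in> real_bfun \<and> (\<forall>s. 0 \<le> f s)"

lemma zero_in_minorants: "nonneg_bfun f \<Longrightarrow> (\<lambda>s. 0) \<in> minorants f"
  unfolding minorants_def nonneg_bfun_def by (auto intro: real_bfun_const)

lemma bdd_above_minorants: "nonneg_bfun f \<Longrightarrow> bdd_above (re_n ` minorants f)"
proof -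
  assume "nonneg_bfun f"
  then obtain C where C: "\<And>s. \<bar>f s\<bar> \<le> C" unfolding nonneg_bfun_def real_bfun_def by blast
  have "re_n g \<le> bnorm n * C" if "g \<in> minorants f" for g
  proof (rule re_n_le)
    show "\<bar>g s\<bar> \<le> C" for s
    proof -
      have "0 \<le> g s" "g s \<le> f s" using that unfolding minorants_def by blast+
      then show ?thesis using C[of s] by linarith
    qed
  qed
  then show ?thesis by (intro bdd_aboveI2)
qed

lemma pos_part_upper: "nonneg_bfun f \<Longrightarrow> g \<in> minorants f \<Longrightarrow> re_n g \<le> pos_part f"
  unfolding pos_part_def by (rule cSup_upper) (auto intro: bdd_above_minorants)

lemma pos_part_least: "nonneg_bfun f \<Longrightarrow> (\<And>g. g \<in> minorants f \<Longrightarrow> re_n g \<le> M) \<Longrightarrow> pos_part f \<le> M"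
  unfolding pos_part_def by (rule cSup_least) (auto dest: zero_in_minorants)

lemma pos_part_nonneg: "nonneg_bfun f \<Longrightarrow> 0 \<le> pos_part f"
  using pos_part_upper[OF _ zero_in_minorants] re_n_zero by force

lemma nonneg_bfun_add: "nonneg_bfun f \<Longrightarrow> nonneg_bfun g \<Longrightarrow> nonneg_bfun (\<lambda>s. f s + g s)"
  unfolding nonneg_bfun_def by (auto intro: real_bfun_add)

lemma nonneg_bfun_scale: "nonneg_bfun f \<Longrightarrow> 0 \<le> c \<Longrightarrow> nonneg_bfun (\<lambda>s. c * f s)"
  unfolding nonneg_bfun_def by (auto intro: real_bfun_scale)

lemma nonneg_bfun_comp: "nonneg_bfun f \<Longrightarrow> nonneg_bfun (\<lambda>t. f (\<sigma> t))"
  unfolding nonneg_bfun_def by (auto intro: real_bfun_comp)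

lemma nonneg_bfun_const: "0 \<le> c \<Longrightarrow> nonneg_bfun (\<lambda>s. c)"
  unfolding nonneg_bfun_def by (auto intro: real_bfun_const)

lemma nonneg_bfun_pos_part: "h \<in> real_bfun \<Longrightarrow> nonneg_bfun (\<lambda>s. max (h s) 0)"
  unfolding nonneg_bfun_def by (auto intro: real_bfun_pos_part)

lemma nonneg_bfun_neg_part: "h \<in> real_bfun \<Longrightarrow> nonneg_bfun (\<lambda>s. max (- h s) 0)"
  unfolding nonneg_bfun_def by (auto intro: real_bfun_neg_part)

lemma pos_part_mono:
  assumes f: "nonneg_bfun f" and f': "nonneg_bfun f'" and le: "\<And>s. f s \<le> f' s"
  shows "pos_part f \<le> pos_part f'"
proof (rule pos_part_least[OF f])
  fix g assume "g \<in> minorants f"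
  then have "g \<in> minorants f'" unfolding minorants_def using le by (auto intro: order_trans)
  then show "re_n g \<le> pos_part f'" by (rule pos_part_upper[OF f'])
qed

text \<open>The Riesz decomposition: a minorant of \<open>f + f'\<close> splits as \<open>min g f\<close> plus a minorant of \<open>f'\<close>.\<close>
lemma pos_part_add:
  assumes f: "nonneg_bfun f" and f': "nonneg_bfun f'"
  shows "pos_part (\<lambda>s. f s + f' s) = pos_part f + pos_part f'"
proof (rule antisym)
  show "pos_part (\<lambda>s. f s + f' s) \<le> pos_part f + pos_part f'"
  proof (rule pos_part_least[OF nonneg_bfun_add[OF f f']])
    fix g assume g: "g \<in> minorants (\<lambda>s. f s + f' s)"
    define g1 where "g1 = (\<lambda>s. min (g s) (f s))"
    define g2 where "g2 = (\<lambda>s. g s - g1 s)"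
    have g1: "g1 \<in> minorants f"
      using g f unfolding minorants_def g1_def nonneg_bfun_def by (auto intro: real_bfun_min)
    have "g2 \<in> real_bfun"
      using g f unfolding minorants_def g2_def g1_def nonneg_bfun_def
      by (intro real_bfun_diff real_bfun_min) auto
    moreover have "0 \<le> g2 s \<and> g2 s \<le> f' s" for s
    proof -
      have "g s \<le> f s + f' s" "0 \<le> f' s" using g f' unfolding minorants_def nonneg_bfun_def by auto
      then show ?thesis unfolding g2_def g1_def by (auto simp: min_def)
    qed
    ultimately have g2: "g2 \<in> minorants f'" unfolding minorants_def by blast
    have "re_n g = re_n g1 + re_n g2"
      using re_n_add[of g1 g2] g1 g2 unfolding g2_def minorants_def by simp
    also have "\<dots> \<le> pos_part f + pos_part f'" by (intro add_mono pos_part_upper f f' g1 g2)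
    finally show "re_n g \<le> pos_part f + pos_part f'" .
  qed
next
  have "pos_part f \<le> pos_part (\<lambda>s. f s + f' s) - re_n g'" if g': "g' \<in> minorants f'" for g'
  proof (rule pos_part_least[OF f])
    fix g assume g: "g \<in> minorants f"
    have "(\<lambda>s. g s + g' s) \<in> minorants (\<lambda>s. f s + f' s)"
      using g g' unfolding minorants_def by (auto intro: real_bfun_add add_mono)
    then have "re_n (\<lambda>s. g s + g' s) \<le> pos_part (\<lambda>s. f s + f' s)"
      by (rule pos_part_upper[OF nonneg_bfun_add[OF f f']])
    moreover have "re_n (\<lambda>s. g s + g' s) = re_n g + re_n g'"
      using g g' unfolding minorants_def by (auto intro: re_n_add)
    ultimately show "re_n g \<le> pos_part (\<lambda>s. f s + f' s) - re_n g'" by simp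
  qed
  then have "pos_part f' \<le> pos_part (\<lambda>s. f s + f' s) - pos_part f"
    by (intro pos_part_least[OF f']) force
  then show "pos_part f + pos_part f' \<le> pos_part (\<lambda>s. f s + f' s)" by simp
qed

lemma pos_part_zero: "pos_part (\<lambda>s. 0) = 0"
proof -
  have "pos_part (\<lambda>s. 0) \<le> 0"
  proof (rule pos_part_least[OF nonneg_bfun_const[OF order_refl]])
    fix g assume "g \<in> minorants (\<lambda>s. 0)"
    then have "g = (\<lambda>s. 0)" unfolding minorants_def by (auto intro: antisym)
    then show "re_n g \<le> 0" using re_n_zero by simp
  qed
  then show ?thesis using pos_part_nonneg[OF nonneg_bfun_const[OF order_refl]] by (simp add: antisym)
qed

lemma pos_part_scale_pos:
  assumes f: "nonneg_bfun f" and c: "0 < c"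
  shows "pos_part (\<lambda>s. c * f s) = c * pos_part f"
proof (rule antisym)
  show "pos_part (\<lambda>s. c * f s) \<le> c * pos_part f"
  proof (rule pos_part_least[OF nonneg_bfun_scale[OF f]])
    fix g assume g: "g \<in> minorants (\<lambda>s. c * f s)"
    have "(\<lambda>s. (1/c) * g s) \<in> minorants f"
      using g c real_bfun_scale[of g "1/c"] unfolding minorants_def by (auto simp: field_simps)
    moreover have "re_n g = c * re_n (\<lambda>s. (1/c) * g s)"
      using g c re_n_scale[of g "1/c"] unfolding minorants_def by simp
    ultimately show "re_n g \<le> c * pos_part f" using pos_part_upper[OF f] c by simp
  qed (use c in simp)
next
  have "pos_part f \<le> pos_part (\<lambda>s. c * f s) / c"
  proof (rule pos_part_least[OF f])
    fix g assume g: "g \<in> minorants f"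
    have "(\<lambda>s. c * g s) \<in> minorants (\<lambda>s. c * f s)"
      using g c unfolding minorants_def by (auto intro: real_bfun_scale)
    then have "re_n (\<lambda>s. c * g s) \<le> pos_part (\<lambda>s. c * f s)"
      using pos_part_upper[OF nonneg_bfun_scale[OF f]] c by simp
    moreover have "re_n (\<lambda>s. c * g s) = c * re_n g"
      using g unfolding minorants_def by (simp add: re_n_scale)
    ultimately have "c * re_n g \<le> pos_part (\<lambda>s. c * f s)" by simp
    then show "re_n g \<le> pos_part (\<lambda>s. c * f s) / c" using c by (simp add: field_simps)
  qed
  then show "c * pos_part f \<le> pos_part (\<lambda>s. c * f s)" using c by (simp add: field_simps)
qed

lemma pos_part_scale: "nonneg_bfun f \<Longrightarrow> 0 \<le> c \<Longrightarrow> pos_part (\<lambda>s. c * f s) = c * pos_part f"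
  using pos_part_scale_pos pos_part_zero by (cases "c = 0") auto

lemma pos_part_comp_ge:
  assumes f: "nonneg_bfun f" and \<sigma>: "\<sigma> \<in> maps"
  shows "pos_part f \<le> pos_part (\<lambda>t. f (\<sigma> t))"
proof (rule pos_part_least[OF f])
  fix g assume g: "g \<in> minorants f"
  have "(\<lambda>t. g (\<sigma> t)) \<in> minorants (\<lambda>t. f (\<sigma> t))"
    using g unfolding minorants_def by (auto intro: real_bfun_comp)
  then have "re_n (\<lambda>t. g (\<sigma> t)) \<le> pos_part (\<lambda>t. f (\<sigma> t))"
    by (rule pos_part_upper[OF nonneg_bfun_comp[OF f]])
  then show "re_n g \<le> pos_part (\<lambda>t. f (\<sigma> t))" using re_n_comp[OF \<sigma>] g unfolding minorants_def by simp
qed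

text \<open>Only \<open>\<ge>\<close> is immediate, since \<open>\<sigma>\<close> need not be onto; equality follows by applying it
  to \<open>f\<close> and \<open>C - f\<close>, whose sum is a constant.\<close>
lemma pos_part_comp:
  assumes f: "nonneg_bfun f" and \<sigma>: "\<sigma> \<in> maps"
  shows "pos_part (\<lambda>t. f (\<sigma> t)) = pos_part f"
proof -
  obtain C where C: "\<And>s. \<bar>f s\<bar> \<le> C" using f unfolding nonneg_bfun_def real_bfun_def by blast
  define f' where "f' = (\<lambda>s. C - f s)"
  have f': "nonneg_bfun f'"
    using f C unfolding nonneg_bfun_def f'_def by (auto intro: real_bfun_diff real_bfun_const simp: abs_le_iff)
  have "pos_part f + pos_part f' = pos_part (\<lambda>t. f (\<sigma> t)) + pos_part (\<lambda>t. f' (\<sigma> t))"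
    using pos_part_add[OF f f']
      pos_part_add[OF nonneg_bfun_comp[OF f, of \<sigma>] nonneg_bfun_comp[OF f', of \<sigma>]]
    by (simp add: f'_def)
  with pos_part_comp_ge[OF f \<sigma>] pos_part_comp_ge[OF f' \<sigma>] show ?thesis by linarith
qed

definition pos_part_real :: "('s \<Rightarrow> real) \<Rightarrow> real" where
  "pos_part_real h = pos_part (\<lambda>s. max (h s) 0) - pos_part (\<lambda>s. max (- h s) 0)"

lemma pos_part_real_diff:
  assumes a: "nonneg_bfun a" and b: "nonneg_bfun b"
  shows "pos_part_real (\<lambda>s. a s - b s) = pos_part a - pos_part b"
proof -
  have h: "(\<lambda>s. a s - b s) \<in> real_bfun" using a b unfolding nonneg_bfun_def by (auto intro: real_bfun_diff)
  have "(\<lambda>s. max (a s - b s) 0 + b s) = (\<lambda>s. a s + max (- (a s - b s)) 0)" by (auto simp: max_def)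
  then have "pos_part (\<lambda>s. max (a s - b s) 0) + pos_part b = pos_part a + pos_part (\<lambda>s. max (- (a s - b s)) 0)"
    using pos_part_add[OF nonneg_bfun_pos_part[OF h] b] pos_part_add[OF a nonneg_bfun_neg_part[OF h]] by simp
  then show ?thesis unfolding pos_part_real_def by simp
qed

lemma pos_part_real_add:
  assumes h: "h \<in> real_bfun" and k: "k \<in> real_bfun"
  shows "pos_part_real (\<lambda>s. h s + k s) = pos_part_real h + pos_part_real k"
proof -
  have "(\<lambda>s. h s + k s) = (\<lambda>s. (max (h s) 0 + max (k s) 0) - (max (- h s) 0 + max (- k s) 0))"
    by (auto simp: max_def)
  then have "pos_part_real (\<lambda>s. h s + k s) = pos_part (\<lambda>s. max (h s) 0 + max (k s) 0)
      - pos_part (\<lambda>s. max (- h s) 0 + max (- k s) 0)"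
    using pos_part_real_diff[OF nonneg_bfun_add[OF nonneg_bfun_pos_part[OF h] nonneg_bfun_pos_part[OF k]]
        nonneg_bfun_add[OF nonneg_bfun_neg_part[OF h] nonneg_bfun_neg_part[OF k]]]
    by simp
  then show ?thesis
    unfolding pos_part_real_def pos_part_add[OF nonneg_bfun_pos_part[OF h] nonneg_bfun_pos_part[OF k]]
      pos_part_add[OF nonneg_bfun_neg_part[OF h] nonneg_bfun_neg_part[OF k]]
    by simp
qed

lemma pos_part_real_scale:
  assumes h: "h \<in> real_bfun"
  shows "pos_part_real (\<lambda>s. c * h s) = c * pos_part_real h"
proof (cases "c \<ge> 0")
  case True
  have "(\<lambda>s. c * h s) = (\<lambda>s. c * max (h s) 0 - c * max (- h s) 0)"
    by (auto simp: max_def algebra_simps)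
  then have "pos_part_real (\<lambda>s. c * h s)
      = pos_part (\<lambda>s. c * max (h s) 0) - pos_part (\<lambda>s. c * max (- h s) 0)"
    using pos_part_real_diff[OF nonneg_bfun_scale[OF nonneg_bfun_pos_part[OF h] True]
        nonneg_bfun_scale[OF nonneg_bfun_neg_part[OF h] True]]
    by simp
  then show ?thesis
    unfolding pos_part_real_def pos_part_scale[OF nonneg_bfun_pos_part[OF h] True]
      pos_part_scale[OF nonneg_bfun_neg_part[OF h] True]
    by (simp add: algebra_simps)
next
  case False
  then have c: "0 \<le> - c" by simp
  have "(\<lambda>s. c * h s) = (\<lambda>s. (- c) * max (- h s) 0 - (- c) * max (h s) 0)"
    by (auto simp: max_def algebra_simps)
  then have "pos_part_real (\<lambda>s. c * h s)
      = pos_part (\<lambda>s. (- c) * max (- h s) 0) - pos_part (\<lambda>s. (- c) * max (h s) 0)"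
    using pos_part_real_diff[OF nonneg_bfun_scale[OF nonneg_bfun_neg_part[OF h] c]
        nonneg_bfun_scale[OF nonneg_bfun_pos_part[OF h] c]]
    by simp
  then show ?thesis
    unfolding pos_part_real_def pos_part_scale[OF nonneg_bfun_pos_part[OF h] c]
      pos_part_scale[OF nonneg_bfun_neg_part[OF h] c]
    by (simp add: algebra_simps)
qed

lemma pos_part_real_comp: "h \<in> real_bfun \<Longrightarrow> \<sigma> \<in> maps \<Longrightarrow> pos_part_real (\<lambda>t. h (\<sigma> t)) = pos_part_real h"
  unfolding pos_part_real_def
  using pos_part_comp[OF nonneg_bfun_pos_part] pos_part_comp[OF nonneg_bfun_neg_part] by simp

lemma pos_part_one_ge: "1 \<le> pos_part (\<lambda>s. 1)"
proof -
  have "(\<lambda>s. 1) \<in> minorants (\<lambda>s. 1)" unfolding minorants_def by (auto intro: real_bfun_const)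
  then have "re_n (\<lambda>s. 1) \<le> pos_part (\<lambda>s. 1)" by (rule pos_part_upper[OF nonneg_bfun_const[OF zero_le_one]])
  moreover have "re_n (\<lambda>s. 1) = 1" unfolding re_n_def using n_augm unfolding augm_def by simp
  ultimately show ?thesis by simp
qed

lemma pos_part_real_le:
  assumes h: "h \<in> real_bfun" and C: "\<And>s. h s \<le> C" "0 \<le> C"
  shows "pos_part_real h \<le> C * pos_part (\<lambda>s. 1)"
proof -
  have "pos_part_real h \<le> pos_part (\<lambda>s. max (h s) 0)"
    unfolding pos_part_real_def using pos_part_nonneg[OF nonneg_bfun_neg_part[OF h]] by simp
  also have "\<dots> \<le> pos_part (\<lambda>s. C * 1)"
    using C by (intro pos_part_mono nonneg_bfun_pos_part h nonneg_bfun_const) auto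
  also have "\<dots> = C * pos_part (\<lambda>s. 1)" by (rule pos_part_scale[OF nonneg_bfun_const[OF zero_le_one] C(2)])
  finally show ?thesis .
qed

definition pos_part_cplx :: "'s linf \<Rightarrow> complex" where
  "pos_part_cplx f = Complex (pos_part_real (\<lambda>s. Re (f s))) (pos_part_real (\<lambda>s. Im (f s)))"

lemma pos_part_cplx_add:
  "f \<in> linf \<Longrightarrow> g \<in> linf \<Longrightarrow> pos_part_cplx (\<lambda>s. f s + g s) = pos_part_cplx f + pos_part_cplx g"
  unfolding pos_part_cplx_def
  using pos_part_real_add[OF real_bfun_Re real_bfun_Re, of f g] pos_part_real_add[OF real_bfun_Im real_bfun_Im, of f g]
  by (simp add: complex_eq_iff)

lemma pos_part_cplx_scale:
  assumes f: "f \<in> linf"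
  shows "pos_part_cplx (\<lambda>s. c * f s) = c * pos_part_cplx f"
proof -
  have "pos_part_real (\<lambda>s. Re (c * f s)) = pos_part_real (\<lambda>s. Re c * Re (f s) + (- Im c) * Im (f s))"
    by simp
  also have "\<dots> = pos_part_real (\<lambda>s. Re c * Re (f s)) + pos_part_real (\<lambda>s. (- Im c) * Im (f s))"
    by (rule pos_part_real_add[OF real_bfun_scale[OF real_bfun_Re[OF f]] real_bfun_scale[OF real_bfun_Im[OF f]]])
  also have "\<dots> = Re c * pos_part_real (\<lambda>s. Re (f s)) - Im c * pos_part_real (\<lambda>s. Im (f s))"
    by (simp only: pos_part_real_scale[OF real_bfun_Re[OF f]] pos_part_real_scale[OF real_bfun_Im[OF f]])
  finally have re: "pos_part_real (\<lambda>s. Re (c * f s))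
      = Re c * pos_part_real (\<lambda>s. Re (f s)) - Im c * pos_part_real (\<lambda>s. Im (f s))" .
  have "pos_part_real (\<lambda>s. Im (c * f s)) = pos_part_real (\<lambda>s. Re c * Im (f s) + Im c * Re (f s))"
    by simp
  also have "\<dots> = pos_part_real (\<lambda>s. Re c * Im (f s)) + pos_part_real (\<lambda>s. Im c * Re (f s))"
    by (rule pos_part_real_add[OF real_bfun_scale[OF real_bfun_Im[OF f]] real_bfun_scale[OF real_bfun_Re[OF f]]])
  also have "\<dots> = Re c * pos_part_real (\<lambda>s. Im (f s)) + Im c * pos_part_real (\<lambda>s. Re (f s))"
    by (simp only: pos_part_real_scale[OF real_bfun_Re[OF f]] pos_part_real_scale[OF real_bfun_Im[OF f]])
  finally have im: "pos_part_real (\<lambda>s. Im (c * f s))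
      = Re c * pos_part_real (\<lambda>s. Im (f s)) + Im c * pos_part_real (\<lambda>s. Re (f s))" .
  show ?thesis unfolding pos_part_cplx_def re im by (simp add: complex_eq_iff)
qed

lemma pos_part_cplx_comp: "f \<in> linf \<Longrightarrow> \<sigma> \<in> maps \<Longrightarrow> pos_part_cplx (\<lambda>t. f (\<sigma> t)) = pos_part_cplx f"
  unfolding pos_part_cplx_def using pos_part_real_comp[OF real_bfun_Re] pos_part_real_comp[OF real_bfun_Im] by simp

text \<open>Rotating \<open>f\<close> by a unit scalar makes \<open>pos_part_cplx f\<close> real, where it is bounded
  through \<open>pos_part_real_le\<close>.\<close>
lemma norm_pos_part_cplx_le:
  assumes f: "f \<in> linf"
  shows "cmod (pos_part_cplx f) \<le> supnorm f * pos_part (\<lambda>s. 1)"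
proof (cases "pos_part_cplx f = 0")
  case True
  then show ?thesis using supnorm_nonneg[OF f] pos_part_one_ge by simp
next
  case False
  define z where "z = pos_part_cplx f"
  define w where "w = cnj z / complex_of_real (cmod z)"
  have z0: "cmod z > 0" using False z_def by simp
  have w1: "cmod w = 1" unfolding w_def using z0 by (simp add: norm_divide)
  have "pos_part_cplx (\<lambda>s. w * f s) = w * z" using pos_part_cplx_scale[OF f] z_def by simp
  also have "\<dots> = complex_of_real (cmod z)" unfolding w_def using z0
    by (simp add: complex_norm_square[symmetric] power2_eq_square field_simps)
  finally have "cmod z = Re (pos_part_cplx (\<lambda>s. w * f s))" by simp
  also have "\<dots> = pos_part_real (\<lambda>s. Re (w * f s))" unfolding pos_part_cplx_def by simp
  also have "\<dots> \<le> supnorm f * pos_part (\<lambda>s. 1)"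
  proof (rule pos_part_real_le[OF real_bfun_Re[OF linf_scale[OF f]] _ supnorm_nonneg[OF f]])
    fix s
    have "Re (w * f s) \<le> cmod (w * f s)" by (rule complex_Re_le_cmod)
    also have "\<dots> \<le> supnorm f" using w1 norm_le_supnorm[OF f] by (simp add: norm_mult)
    finally show "Re (w * f s) \<le> supnorm f" .
  qed
  finally show ?thesis unfolding z_def .
qed

definition mean :: "'s bid" where
  "mean f = (if f \<in> linf then pos_part_cplx f / complex_of_real (pos_part (\<lambda>s. 1)) else 0)"

lemma norm_mean_le: "f \<in> linf \<Longrightarrow> cmod (mean f) \<le> supnorm f"
  unfolding mean_def using norm_pos_part_cplx_le pos_part_one_ge
  by (simp add: norm_divide divide_le_eq)

lemma mean_in_bidual: "mean \<in> bidual"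
  unfolding bidual_def using norm_mean_le
  by (auto intro!: exI[of _ 1] simp: mean_def linf_add linf_scale pos_part_cplx_add pos_part_cplx_scale
      add_divide_distrib)

lemma mean_augm: "mean augm = 1"
proof -
  have "pos_part_real (\<lambda>s. 1) = pos_part (\<lambda>s. 1)" "pos_part_real (\<lambda>s. 0) = 0"
    unfolding pos_part_real_def using pos_part_zero by simp_all
  then show ?thesis
    unfolding mean_def pos_part_cplx_def using augm_in_linf pos_part_one_ge
    by (simp add: augm_def complex_eq_iff)
qed

lemma bnorm_mean: "bnorm mean = 1"
proof (rule antisym)
  show "bnorm mean \<le> 1" by (rule bnorm_least) (use norm_mean_le in force)
  show "1 \<le> bnorm mean"
    using norm_le_bnorm[OF mean_in_bidual augm_in_linf] by (simp add: supnorm_augm mean_augm)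
qed

lemma mean_comp: "\<sigma> \<in> maps \<Longrightarrow> f \<in> linf \<Longrightarrow> mean (\<lambda>t. f (\<sigma> t)) = mean f"
  unfolding mean_def using pos_part_cplx_comp linf_comp by metis

end

lemma invariant_functional_rescale:
  assumes n: "n \<in> bidual" "n augm \<noteq> 0"
    and inv: "\<And>\<sigma> f. \<sigma> \<in> maps \<Longrightarrow> f \<in> linf \<Longrightarrow> n (\<lambda>t. f (\<sigma> t)) = n f"
  shows "invariant_functional (bscale (1 / n augm) n) maps"
proof
  show "bscale (1 / n augm) n \<in> bidual" by (rule bscale_in_bidual[OF n(1)])
qed (use n(2) inv in \<open>simp_all add: bscale_def\<close>)

lemma left_amenableI:
  fixes n :: "('s::semigroup_mult) bid"
  assumes n: "n \<in> bidual" "n augm \<noteq> 0" and inv: "\<And>s f. f \<in> linf \<Longrightarrow> n (\<lambda>t. f (s * t)) = n f"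
  shows "left_amenable TYPE('s)"
proof -
  interpret invariant_functional "bscale (1 / n augm) n" "range (\<lambda>s t. s * t)"
    using n inv by (intro invariant_functional_rescale) auto
  have "arens (dhat s) mean f = mean f" for s f
    using mean_comp[of "\<lambda>t. s * t" f]
    by (cases "f \<in> linf") (simp_all add: arens_dhat_left mean_in_bidual arens_outside bidual_outside)
  then show ?thesis
    unfolding left_amenable_def using mean_in_bidual bnorm_mean mean_augm by blast
qed

lemma right_amenableI:
  fixes n :: "('s::semigroup_mult) bid"
  assumes n: "n \<in> bidual" "n augm \<noteq> 0" and inv: "\<And>s f. f \<in> linf \<Longrightarrow> n (\<lambda>t. f (t * s)) = n f"
  shows "right_amenable TYPE('s)"
proof -
  interpret invariant_functional "bscale (1 / n augm) n" "range (\<lambda>s t. t * s)"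
    using n inv by (intro invariant_functional_rescale) auto
  have "arens mean (dhat s) f = mean f" for s f
    using mean_comp[of "\<lambda>t. t * s" f]
    by (cases "f \<in> linf") (simp_all add: arens_dhat_right mean_in_bidual arens_outside bidual_outside)
  then show ?thesis
    unfolding right_amenable_def using mean_in_bidual bnorm_mean mean_augm by blast
qed

theorem mainTheorem2:
  assumes "bidual_pseudo_contractible TYPE('s::semigroup_mult)"
  shows "amenable_sg TYPE('s)"
proof -
  obtain F :: "'s tens filter" where F: "F \<noteq> bot"
    and diagonal: "\<forall>\<^sub>F u in F. u \<in> ptensor \<and> (\<forall>a\<in>bidual. tlmod a u = trmod u a)"
    and approx: "\<forall>a\<in>bidual. ((\<lambda>u. bnorm (\<lambda>f. arens (tpi u) a f - a f)) \<longlongrightarrow> 0) F"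
    using assms unfolding bidual_pseudo_contractible_def by blast
  fix s :: 's
  have "\<forall>\<^sub>F u in F. bnorm (\<lambda>f. arens (tpi u) (dhat s) f - dhat s f) < 1"
    using tendstoD[OF approx[rule_format, OF dhat_in_bidual[of s]], of 1] by (auto elim: eventually_mono)
  then obtain u where u: "u \<in> ptensor" and comm: "\<forall>a\<in>bidual. tlmod a u = trmod u a"
    and near: "bnorm (\<lambda>f. arens (tpi u) (dhat s) f - dhat s f) < 1"
    using eventually_happens'[OF F eventually_conj[OF diagonal]] by blast
  have c: "tpi u augm \<noteq> 0" by (rule tpi_augm_neq_0[OF u near])
  have "left_amenable TYPE('s)"
    using slice_left_augm[OF u] c slice_left_comp_mult[OF u comm[rule_format, OF dhat_in_bidual]]
    by (intro left_amenableI[OF slice_left_in_bidual[OF u]]) auto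
  moreover have "right_amenable TYPE('s)"
    using slice_right_augm[OF u] c slice_right_comp_mult[OF u comm[rule_format, OF dhat_in_bidual]]
    by (intro right_amenableI[OF slice_right_in_bidual[OF u]]) auto
  ultimately show ?thesis unfolding amenable_sg_def ..
qed

end
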